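(* Let $X$ be a real Banach space, $I=\{1,\ldots,m\}$, $f_i\colon X\to\mathbb{R}$ ($i\in I$), $M=\{x\in X\mid f_i(x)=0\ \forall i\in I\}$ and $\overline{x}\in M$. Let the functions $f_i$, $i\in I$, be continuous in a neighbourhood of $\overline{x}$ and quasidifferentiable at $\overline{x}$ uniformly along finite dimensional spaces, with given quasidifferentials. Let $x_i^*\in\underline{\partial} f_i(\overline{x})$ and $y_i^*\in\overline{\partial} f_i(\overline{x})$, $i\in I$, be such that, with $C_i=(\underline{\partial} f_i(\overline{x})+y_i^* )\cup(-x_i^*-\overline{\partial} f_i(\overline{x}))$, $$C_i\cap\operatorname{cl}^*\operatorname{cone}\{-C_k\mid k\ne i\}=\emptyset\quad\forall i\in I$$ (in particular, if $m=1$, it suffices that $0\notin\underline{\partial} f_1(\overline{x})+y_1^*$ and $0\notin x_1^*+\overline{\partial} f_1(\overline{x})$). Then $$\Big\{v\in X\Bigm| s(\underline{\partial} f_i(\overline{x})+y_i^*,v)\le0,\ s(-x_i^*-\overline{\partial} f_i(\overline{x}),v)\le0,\ i\in I\Big\}\subseteq T_M(\overline{x}).$$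
   Context: $X^*$ is the dual with pairing $\langle\cdot,\cdot\rangle$; $\operatorname{cl}^*$ is weak$^*$ closure. $f$ is d.d. at $x$ if $f'(x,v)=\lim_{\alpha\to+0}(f(x+\alpha v)-f(x))/\alpha$ exists finitely for all $v$; d.d. uniformly along finite dimensional spaces if moreover for any $v$, any finite dimensional subspace $X_0$ and $\varepsilon>0$ there is $\delta>0$ with $|(f(x+\alpha v')-f(x))/\alpha-f'(x,v)|<\varepsilon$ whenever $0<\alpha<\delta$, $v'\in v+X_0$, $\|v'-v\|<\delta$. $f$ is quasidifferentiable at $x$ if d.d. and there is a pair $[\underline{\partial} f(x),\overline{\partial} f(x)]$ of convex weak$^*$ compact subsets of $X^*$ with $f'(x,v)=\max_{x^*\in\underline{\partial} f(x)}\langle x^*,v\rangle+\min_{y^*\in\overline{\partial} f(x)}\langle y^*,v\rangle$; uniformly along finite dimensional spaces if also d.d. in that uniform sense. A specific quasidifferential is fixed for each function. $s(C,v)=\sup_{x^*\in C}\langle x^*,v\rangle$; $\operatorname{cone}$ of a family of sets is the set of finite nonnegative combinations of elements of their union. $T_M(x)$ is the contingent cone: all $v$ with $\alpha_n\to+0$, $v_n\to v$, $x+\alpha_nv_n\in M$. *)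

theory Defs
  imports "HOL-Analysis.Analysis"
begin

text \<open>The dual space X* is modelled as the set of bounded (continuous) linear
functionals X \<Rightarrow> real; the pairing is function application.  The weak* topology
is the topology of pointwise convergence, i.e. the subspace topology induced on
the dual by the product topology of the function type.\<close>

definition dual_space :: "('a::real_normed_vector \<Rightarrow> real) set" where
  "dual_space = {\<phi>. bounded_linear \<phi>}"

definition wstar_closure :: "('a::real_normed_vector \<Rightarrow> real) set \<Rightarrow> ('a \<Rightarrow> real) set" where
  "wstar_closure S = closure S \<inter> dual_space"

text \<open>Convex weak* compact subset of X* (nonempty, as max/min are taken over it).\<close>
definition wstar_convex_compact :: "('a::real_normed_vector \<Rightarrow> real) set \<Rightarrow> bool" where
  "wstar_convex_compact C \<longleftrightarrow> C \<subseteq> dual_space \<and> C \<noteq> {} \<and> compact C \<and>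
     (\<forall>\<phi>\<in>C. \<forall>\<psi>\<in>C. \<forall>t::real. 0 \<le> t \<and> t \<le> 1 \<longrightarrow> (\<lambda>x. t * \<phi> x + (1 - t) * \<psi> x) \<in> C)"

definition supp :: "('a \<Rightarrow> real) set \<Rightarrow> 'a \<Rightarrow> real" where
  "supp C v = Sup ((\<lambda>\<phi>. \<phi> v) ` C)"

definition fplus :: "('a \<Rightarrow> real) set \<Rightarrow> ('a \<Rightarrow> real) \<Rightarrow> ('a \<Rightarrow> real) set" where
  "fplus A y = (\<lambda>\<phi>. \<lambda>x. \<phi> x + y x) ` A"

definition fneg :: "('a \<Rightarrow> real) set \<Rightarrow> ('a \<Rightarrow> real) set" where
  "fneg A = (\<lambda>\<phi>. \<lambda>x. - \<phi> x) ` A"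

definition cone_fam :: "('a \<Rightarrow> real) set set \<Rightarrow> ('a \<Rightarrow> real) set" where
  "cone_fam F = {\<phi>. \<exists>S c. finite S \<and> S \<subseteq> \<Union>F \<and> (\<forall>\<psi>\<in>S. c \<psi> \<ge> (0::real)) \<and>
                        \<phi> = (\<lambda>x. \<Sum>\<psi>\<in>S. c \<psi> * \<psi> x)}"

definition dir_diff :: "('a::real_normed_vector \<Rightarrow> real) \<Rightarrow> 'a \<Rightarrow> bool" where
  "dir_diff f x \<longleftrightarrow> (\<forall>v. \<exists>L. ((\<lambda>\<alpha>. (f (x + \<alpha> *\<^sub>R v) - f x) / \<alpha>) \<longlongrightarrow> L) (at_right 0))"

definition dderiv :: "('a::real_normed_vector \<Rightarrow> real) \<Rightarrow> 'a \<Rightarrow> 'a \<Rightarrow> real" where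
  "dderiv f x v = Lim (at_right 0) (\<lambda>\<alpha>. (f (x + \<alpha> *\<^sub>R v) - f x) / \<alpha>)"

text \<open>Directionally differentiable uniformly along finite dimensional spaces
(a finite dimensional subspace is the span of a finite set).\<close>
definition dir_diff_unif :: "('a::real_normed_vector \<Rightarrow> real) \<Rightarrow> 'a \<Rightarrow> bool" where
  "dir_diff_unif f x \<longleftrightarrow> dir_diff f x \<and>
     (\<forall>v B \<epsilon>. finite B \<and> \<epsilon> > 0 \<longrightarrow>
        (\<exists>\<delta>>0. \<forall>\<alpha> v'. 0 < \<alpha> \<and> \<alpha> < \<delta> \<and> v' - v \<in> span B \<and> norm (v' - v) < \<delta> \<longrightarrow>
            \<bar>(f (x + \<alpha> *\<^sub>R v') - f x) / \<alpha> - dderiv f x v\<bar> < \<epsilon>))"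

text \<open>(max/min over weak* compact sets are written as Sup/Inf, which are attained.) [Dl, Du] is a quasidifferential of f at x, uniformly along finite dimensional spaces.\<close>
definition quasidiff_unif ::
  "('a::real_normed_vector \<Rightarrow> real) \<Rightarrow> 'a \<Rightarrow> ('a \<Rightarrow> real) set \<Rightarrow> ('a \<Rightarrow> real) set \<Rightarrow> bool" where
  "quasidiff_unif f x Dl Du \<longleftrightarrow> dir_diff_unif f x \<and>
     wstar_convex_compact Dl \<and> wstar_convex_compact Du \<and>
     (\<forall>v. dderiv f x v = Sup ((\<lambda>\<phi>. \<phi> v) ` Dl) + Inf ((\<lambda>\<psi>. \<psi> v) ` Du))"

definition contingent_cone :: "'a::real_normed_vector set \<Rightarrow> 'a \<Rightarrow> 'a set" where
  "contingent_cone M x = {v. \<exists>\<alpha> u. (\<forall>n. \<alpha> n > 0) \<and> \<alpha> \<longlonglongrightarrow> 0 \<and> u \<longlonglongrightarrow> v \<and>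
                                  (\<forall>n. x + \<alpha> n *\<^sub>R u n \<in> M)}"

end

theory Submission
  imports Defs "HOL-Homology.Brouwer_Degree"
begin

text \<open>Fix \<open>v\<close> in the left-hand set and write \<open>C\<^sub>k = A\<^sub>k \<union> B\<^sub>k\<close> for the two parts of \<open>C\<^sub>k\<close>.
  The weak* topology is that of pointwise convergence, so separating \<open>A\<^sub>k\<close> and \<open>B\<^sub>k\<close> from the
  cone generated by the other \<open>-C\<^sub>j\<close> reduces to a finite dimensional least-norm argument. It
  yields points \<open>p\<^sub>k, q\<^sub>k\<close> of the space with \<open>a p\<^sub>k \<le> -1\<close> on \<open>A\<^sub>k\<close>, \<open>b q\<^sub>k \<le> -1\<close> on \<open>B\<^sub>k\<close>, and
  \<open>c p\<^sub>k, c q\<^sub>k \<le> 0\<close> for \<open>c \<in> C\<^sub>j\<close>, \<open>j \<noteq> k\<close>.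
  For \<open>\<eta> > 0\<close> sweep the directions \<open>v + \<eta> \<Sum>\<^sub>k (t\<^sub>k\<^sup>+ q\<^sub>k + t\<^sub>k\<^sup>- p\<^sub>k)\<close> over the unit ball of
  \<open>\<real>\<^sup>m\<close>. The quasidifferential bounds give \<open>t\<^sub>k f\<^sub>k'(x; \<dots>) \<ge> \<eta> t\<^sub>k\<^sup>2\<close>, and uniform directional
  differentiability along the span of the \<open>p\<^sub>k, q\<^sub>k\<close> makes \<open>f\<^sub>k(x + \<alpha> \<dots>) / \<alpha>\<close> uniformly close
  to these derivatives for small \<open>\<alpha>\<close>. The resulting field on the ball points outward on the
  sphere, so it has a zero because the sphere is not contractible. This gives points of \<open>M\<close>
  of the form \<open>x + \<alpha> u\<close> with \<open>\<alpha> < \<eta>\<close> and \<open>u\<close> within \<open>O(\<eta>)\<close> of \<open>v\<close>.\<close>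

definition fun_convex :: "('a \<Rightarrow> real) set \<Rightarrow> bool" where
  "fun_convex S \<longleftrightarrow>
     (\<forall>a\<in>S. \<forall>b\<in>S. \<forall>t. 0 \<le> t \<and> t \<le> 1 \<longrightarrow> (\<lambda>x. t * a x + (1 - t) * b x) \<in> S)"

lemma fun_convexD:
  "fun_convex S \<Longrightarrow> a \<in> S \<Longrightarrow> b \<in> S \<Longrightarrow> 0 \<le> t \<Longrightarrow> t \<le> 1 \<Longrightarrow>
    (\<lambda>x. t * a x + (1 - t) * b x) \<in> S"
  unfolding fun_convex_def by blast

lemma wstar_convex_compact_iff:
  "wstar_convex_compact S \<longleftrightarrow> S \<subseteq> dual_space \<and> S \<noteq> {} \<and> compact S \<and> fun_convex S"
  unfolding wstar_convex_compact_def fun_convex_def by blast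

lemma dual_space_linear: "a \<in> dual_space \<Longrightarrow> linear a"
  unfolding dual_space_def by (simp add: bounded_linear.linear)

lemma continuous_on_apply [continuous_intros]: "continuous_on S (\<lambda>\<phi>. \<phi> x)"
  by (rule continuous_on_subset[OF continuous_on_product_coordinates]) simp

lemma wstar_convex_compact_fplus:
  assumes S: "wstar_convex_compact S" and y: "y \<in> dual_space"
  shows "wstar_convex_compact (fplus S y)"
proof -
  have "fplus S y \<subseteq> dual_space"
    using S y by (auto simp: wstar_convex_compact_def fplus_def dual_space_def bounded_linear_add)
  moreover have "compact (fplus S y)"
    using S unfolding fplus_def wstar_convex_compact_def
    by (intro compact_continuous_image continuous_intros) auto
  moreover have "fun_convex (fplus S y)"
  proof -
    have "(\<lambda>x. t * (a x + y x) + (1 - t) * (b x + y x)) = (\<lambda>x. (t * a x + (1 - t) * b x) + y x)"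
      for a b and t :: real
      by (simp add: algebra_simps)
    then show ?thesis
      using S unfolding wstar_convex_compact_iff fun_convex_def fplus_def by auto
  qed
  ultimately show ?thesis
    using S by (auto simp: wstar_convex_compact_iff fplus_def)
qed

lemma wstar_convex_compact_fneg:
  assumes S: "wstar_convex_compact S"
  shows "wstar_convex_compact (fneg S)"
proof -
  have "fneg S \<subseteq> dual_space"
    using S by (auto simp: wstar_convex_compact_def fneg_def dual_space_def bounded_linear_minus)
  moreover have "compact (fneg S)"
    using S unfolding fneg_def wstar_convex_compact_def
    by (intro compact_continuous_image continuous_intros) auto
  moreover have "fun_convex (fneg S)"
    unfolding fun_convex_def fneg_def
  proof clarify
    fix a b and t :: real assume "a \<in> S" "b \<in> S" "0 \<le> t" "t \<le> 1"
    then have "(\<lambda>x. t * a x + (1 - t) * b x) \<in> S"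
      using S by (auto simp: wstar_convex_compact_iff fun_convex_def)
    then show "(\<lambda>x. t * - a x + (1 - t) * - b x) \<in> (\<lambda>\<phi> x. - \<phi> x) ` S"
      by (rule rev_image_eqI) simp
  qed
  ultimately show ?thesis
    using S by (auto simp: wstar_convex_compact_iff fneg_def)
qed

lemma bounded_apply_compact: "compact (S :: ('a \<Rightarrow> real) set) \<Longrightarrow> bounded ((\<lambda>\<phi>. \<phi> w) ` S)"
  by (intro compact_imp_bounded compact_continuous_image continuous_intros)

lemma bdd_above_apply_compact: "compact (S :: ('a \<Rightarrow> real) set) \<Longrightarrow> bdd_above ((\<lambda>\<phi>. \<phi> w) ` S)"
  by (simp add: bounded_apply_compact bounded_imp_bdd_above)

lemma bdd_below_apply_compact: "compact (S :: ('a \<Rightarrow> real) set) \<Longrightarrow> bdd_below ((\<lambda>\<phi>. \<phi> w) ` S)"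
  by (simp add: bounded_apply_compact bounded_imp_bdd_below)

lemma supp_upper: "compact S \<Longrightarrow> a \<in> S \<Longrightarrow> a w \<le> supp S w"
  unfolding supp_def by (rule cSup_upper) (auto intro: bdd_above_apply_compact)

lemma supp_least: "S \<noteq> {} \<Longrightarrow> (\<And>a. a \<in> S \<Longrightarrow> a w \<le> c) \<Longrightarrow> supp S w \<le> c"
  unfolding supp_def by (rule cSup_least) auto

lemma quasidiff_unif_wstar_convex_compact:
  assumes q: "quasidiff_unif f x Dl Du" and xs: "xs \<in> Dl" and ys: "ys \<in> Du"
  shows "wstar_convex_compact (fplus Dl ys)"
    and "wstar_convex_compact (fplus (fneg Du) (\<lambda>x. - xs x))"
proof -
  have Dl: "wstar_convex_compact Dl" and Du: "wstar_convex_compact Du"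
    using q by (auto simp: quasidiff_unif_def)
  then have "ys \<in> dual_space" "(\<lambda>x. - xs x) \<in> dual_space"
    using xs ys by (auto simp: wstar_convex_compact_iff dual_space_def bounded_linear_minus)
  then show "wstar_convex_compact (fplus Dl ys)"
    and "wstar_convex_compact (fplus (fneg Du) (\<lambda>x. - xs x))"
    using Dl Du by (simp_all add: wstar_convex_compact_fplus wstar_convex_compact_fneg)
qed

lemma quasidiff_unif_dir_diff_unif: "quasidiff_unif f x Dl Du \<Longrightarrow> dir_diff_unif f x"
  by (simp add: quasidiff_unif_def)

lemma quasidiff_unif_dderiv_le:
  assumes q: "quasidiff_unif f x Dl Du" and xs: "xs \<in> Dl" and ys: "ys \<in> Du"
  shows "dderiv f x w \<le> supp (fplus Dl ys) w"
proof -
  have Dl: "compact Dl" "Dl \<noteq> {}" and Du: "compact Du"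
    using q by (auto simp: quasidiff_unif_def wstar_convex_compact_def)
  have "compact (fplus Dl ys)"
    using quasidiff_unif_wstar_convex_compact(1)[OF assms] by (simp add: wstar_convex_compact_iff)
  have "Inf ((\<lambda>\<psi>. \<psi> w) ` Du) \<le> ys w"
    using ys by (auto intro: cInf_lower bdd_below_apply_compact[OF Du])
  moreover have "Sup ((\<lambda>\<phi>. \<phi> w) ` Dl) \<le> supp (fplus Dl ys) w - ys w"
  proof (rule cSup_least)
    fix r assume "r \<in> (\<lambda>\<phi>. \<phi> w) ` Dl"
    then obtain \<phi> where "\<phi> \<in> Dl" "r = \<phi> w" by auto
    moreover from \<open>\<phi> \<in> Dl\<close> have "(\<lambda>x. \<phi> x + ys x) \<in> fplus Dl ys"
      unfolding fplus_def by auto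
    ultimately show "r \<le> supp (fplus Dl ys) w - ys w"
      using supp_upper[OF \<open>compact (fplus Dl ys)\<close>, of _ w] by fastforce
  qed (use Dl in auto)
  ultimately show ?thesis
    using q by (simp add: quasidiff_unif_def)
qed

lemma quasidiff_unif_dderiv_ge:
  assumes q: "quasidiff_unif f x Dl Du" and xs: "xs \<in> Dl" and ys: "ys \<in> Du"
  shows "- supp (fplus (fneg Du) (\<lambda>x. - xs x)) w \<le> dderiv f x w"
proof -
  let ?B = "fplus (fneg Du) (\<lambda>x. - xs x)"
  have Dl: "compact Dl" and Du: "compact Du" "Du \<noteq> {}"
    using q by (auto simp: quasidiff_unif_def wstar_convex_compact_def)
  have "compact ?B"
    using quasidiff_unif_wstar_convex_compact(2)[OF assms] by (simp add: wstar_convex_compact_iff)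
  have "xs w \<le> Sup ((\<lambda>\<phi>. \<phi> w) ` Dl)"
    using xs by (auto intro: cSup_upper bdd_above_apply_compact[OF Dl])
  moreover have "- supp ?B w - xs w \<le> Inf ((\<lambda>\<psi>. \<psi> w) ` Du)"
  proof (rule cInf_greatest)
    fix r assume "r \<in> (\<lambda>\<psi>. \<psi> w) ` Du"
    then obtain \<psi> where "\<psi> \<in> Du" "r = \<psi> w" by auto
    moreover from \<open>\<psi> \<in> Du\<close> have "(\<lambda>x. - \<psi> x + - xs x) \<in> ?B"
      unfolding fplus_def fneg_def by auto
    ultimately show "- supp ?B w - xs w \<le> r"
      using supp_upper[OF \<open>compact ?B\<close>, of _ w] by fastforce
  qed (use Du in auto)
  ultimately show ?thesis
    using q by (simp add: quasidiff_unif_def)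
qed

lemma cone_fam_zero: "(\<lambda>x. 0) \<in> cone_fam F"
  unfolding cone_fam_def by (rule CollectI, rule exI[of _ "{}"]) auto

lemma cone_fam_base: "c \<in> \<Union>F \<Longrightarrow> c \<in> cone_fam F"
  unfolding cone_fam_def by (rule CollectI, rule exI[of _ "{c}"], rule exI[of _ "\<lambda>_. 1"]) auto

lemma cone_fam_scale:
  assumes "\<kappa> \<in> cone_fam F" "s \<ge> 0"
  shows "(\<lambda>x. s * \<kappa> x) \<in> cone_fam F"
proof -
  obtain S c where "finite S" "S \<subseteq> \<Union>F" "\<forall>\<psi>\<in>S. c \<psi> \<ge> 0" "\<kappa> = (\<lambda>x. \<Sum>\<psi>\<in>S. c \<psi> * \<psi> x)"
    using assms(1) unfolding cone_fam_def by blast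
  then show ?thesis
    unfolding cone_fam_def using assms(2)
    by (intro CollectI exI[of _ S] exI[of _ "\<lambda>\<psi>. s * c \<psi>"])
      (auto simp: sum_distrib_left mult.assoc)
qed

lemma cone_fam_add:
  assumes "\<kappa>1 \<in> cone_fam F" "\<kappa>2 \<in> cone_fam F"
  shows "(\<lambda>x. \<kappa>1 x + \<kappa>2 x) \<in> cone_fam F"
proof -
  obtain S1 c1 where S1: "finite S1" "S1 \<subseteq> \<Union>F" "\<forall>\<psi>\<in>S1. c1 \<psi> \<ge> 0"
    "\<kappa>1 = (\<lambda>x. \<Sum>\<psi>\<in>S1. c1 \<psi> * \<psi> x)"
    using assms(1) unfolding cone_fam_def by blast
  obtain S2 c2 where S2: "finite S2" "S2 \<subseteq> \<Union>F" "\<forall>\<psi>\<in>S2. c2 \<psi> \<ge> 0"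
    "\<kappa>2 = (\<lambda>x. \<Sum>\<psi>\<in>S2. c2 \<psi> * \<psi> x)"
    using assms(2) unfolding cone_fam_def by blast
  define c where "c \<psi> = (if \<psi> \<in> S1 then c1 \<psi> else 0) + (if \<psi> \<in> S2 then c2 \<psi> else 0)" for \<psi>
  have "(\<Sum>\<psi>\<in>S1 \<union> S2. c \<psi> * \<psi> x) = \<kappa>1 x + \<kappa>2 x" for x
  proof -
    have "(\<Sum>\<psi>\<in>S1 \<union> S2. c \<psi> * \<psi> x)
        = (\<Sum>\<psi>\<in>S1 \<union> S2. if \<psi> \<in> S1 then c1 \<psi> * \<psi> x else 0)
          + (\<Sum>\<psi>\<in>S1 \<union> S2. if \<psi> \<in> S2 then c2 \<psi> * \<psi> x else 0)"
      unfolding sum.distrib[symmetric] by (rule sum.cong) (simp_all add: c_def distrib_right)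
    also have "\<dots> = \<kappa>1 x + \<kappa>2 x"
      using S1(1,4) S2(1,4) by (simp add: sum.If_cases Int_absorb1)
    finally show ?thesis .
  qed
  moreover have "\<forall>\<psi>\<in>S1 \<union> S2. c \<psi> \<ge> 0"
    using S1(3) S2(3) unfolding c_def by auto
  ultimately show ?thesis
    unfolding cone_fam_def using S1(1,2) S2(1,2)
    by (intro CollectI exI[of _ "S1 \<union> S2"] exI[of _ c]) auto
qed

lemma fun_convex_cone_fam: "fun_convex (cone_fam F)"
  unfolding fun_convex_def by (simp add: cone_fam_add cone_fam_scale)

section \<open>Separation from a cone in the weak* topology\<close>

lemma open_fun_contains_box:
  fixes U :: "('a \<Rightarrow> real) set"
  assumes "open U" "a \<in> U"
  shows "\<exists>P e. finite P \<and> e > 0 \<and> (\<forall>\<phi>. (\<forall>x\<in>P. \<bar>\<phi> x - a x\<bar> < e) \<longrightarrow> \<phi> \<in> U)"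
proof -
  obtain V where V: "finite {i. V i \<noteq> UNIV}" "\<And>i. open (V i)" "a \<in> Pi\<^sub>E UNIV V"
    "Pi\<^sub>E UNIV V \<subseteq> U"
    using assms unfolding open_fun_def openin_product_topology_alt by auto
  define P where "P = {i. V i \<noteq> UNIV}"
  have "\<forall>i\<in>P. \<exists>e>0. ball (a i) e \<subseteq> V i"
    using V(2,3) open_contains_ball by blast
  then obtain r where r: "\<And>i. i \<in> P \<Longrightarrow> r i > 0 \<and> ball (a i) (r i) \<subseteq> V i"
    by metis
  define e where "e = Min (insert 1 (r ` P))"
  have "finite P"
    using V(1) by (simp add: P_def)
  then have "e > 0" and e_le: "\<And>i. i \<in> P \<Longrightarrow> e \<le> r i"
    using r by (auto simp: e_def)
  have "\<phi> \<in> U" if \<phi>: "\<forall>x\<in>P. \<bar>\<phi> x - a x\<bar> < e" for \<phi>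
  proof -
    have "\<phi> i \<in> V i" for i
    proof (cases "i \<in> P")
      case True
      then have "\<phi> i \<in> ball (a i) (r i)"
        using \<phi> e_le by (force simp: dist_real_def abs_minus_commute)
      then show ?thesis
        using r True by blast
    qed (simp add: P_def)
    then show ?thesis
      using V(4) by auto
  qed
  then show ?thesis
    using \<open>finite P\<close> \<open>e > 0\<close> by blast
qed

text \<open>Basic weak* neighbourhoods constrain finitely many evaluations; compactness of \<open>A\<close> makes one
  finite set of evaluation points work for all of \<open>A\<close>.\<close>

lemma compact_apart_from_closure_on_finite_set:
  fixes A K :: "('a \<Rightarrow> real) set"
  assumes A: "compact A" and disjoint: "A \<inter> closure K = {}"
  obtains P e where "finite P" "e > 0" "\<And>a \<kappa>. a \<in> A \<Longrightarrow> \<kappa> \<in> K \<Longrightarrow> \<exists>x\<in>P. e \<le> \<bar>a x - \<kappa> x\<bar>"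
proof -
  have "\<exists>P e. finite P \<and> e > 0 \<and> (\<forall>\<phi>. (\<forall>x\<in>P. \<bar>\<phi> x - a x\<bar> < e) \<longrightarrow> \<phi> \<in> - closure K)"
    if "a \<in> A" for a
    using disjoint that by (intro open_fun_contains_box) auto
  then obtain Q r where Qr: "\<And>a. a \<in> A \<Longrightarrow> finite (Q a) \<and> r a > 0 \<and>
      (\<forall>\<phi>. (\<forall>x\<in>Q a. \<bar>\<phi> x - a x\<bar> < r a) \<longrightarrow> \<phi> \<in> - closure K)"
    by metis
  define box where "box a = {\<phi>. \<forall>x\<in>Q a. \<phi> (id x) \<in> ball (a x) (r a / 2)}" for a
  have "open (box a)" if "a \<in> A" for a
    unfolding box_def using Qr that by (intro product_topology_basis') auto
  moreover have "A \<subseteq> \<Union> (box ` A)"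
    using Qr unfolding box_def by force
  ultimately obtain T where T: "T \<subseteq> A" "finite T" "A \<subseteq> \<Union> (box ` T)"
    using compactE_image[OF A] by metis
  define P where "P = \<Union> (Q ` T)"
  define e where "e = Min (insert 1 ((\<lambda>a. r a / 2) ` T))"
  have "finite P" "e > 0"
    using T Qr by (auto simp: P_def e_def)
  have e_le: "e \<le> r a / 2" if "a \<in> T" for a
    unfolding e_def using T(2) that by (intro Min_le) auto
  have "\<exists>x\<in>P. e \<le> \<bar>a x - \<kappa> x\<bar>" if a: "a \<in> A" and \<kappa>: "\<kappa> \<in> K" for a \<kappa>
  proof (rule ccontr)
    assume "\<not> ?thesis"
    then have close: "\<forall>x\<in>P. \<bar>a x - \<kappa> x\<bar> < e"
      by auto
    obtain a0 where a0: "a0 \<in> T" "a \<in> box a0"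
      using T a by auto
    have "\<bar>\<kappa> x - a0 x\<bar> < r a0" if "x \<in> Q a0" for x
    proof -
      have "\<bar>a x - \<kappa> x\<bar> < r a0 / 2"
        using close e_le[OF a0(1)] a0(1) that by (fastforce simp: P_def)
      moreover have "\<bar>a x - a0 x\<bar> < r a0 / 2"
        using a0(2) that by (auto simp: box_def dist_real_def abs_minus_commute)
      ultimately show ?thesis
        by linarith
    qed
    then have "\<kappa> \<in> - closure K"
      using Qr a0 T by blast
    then show False
      using \<kappa> closure_subset by auto
  qed
  then show thesis
    using that \<open>finite P\<close> \<open>e > 0\<close> by blast
qed

definition sqnorm_on :: "'a set \<Rightarrow> ('a \<Rightarrow> real) \<Rightarrow> real" where
  "sqnorm_on P y = (\<Sum>x\<in>P. (y x)\<^sup>2)"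

lemma sqnorm_on_nonneg: "0 \<le> sqnorm_on P y"
  unfolding sqnorm_on_def by (simp add: sum_nonneg)

lemma sqnorm_on_ge_square: "finite P \<Longrightarrow> x \<in> P \<Longrightarrow> (y x)\<^sup>2 \<le> sqnorm_on P y"
  unfolding sqnorm_on_def by (rule member_le_sum) auto

lemma nonneg_if_nonneg_perturbations:
  fixes S Q :: real
  assumes "\<And>t. 0 < t \<Longrightarrow> t \<le> 1 \<Longrightarrow> 0 \<le> S + t * Q"
  shows "0 \<le> S"
proof (rule tendsto_lowerbound)
  show "((\<lambda>t. S + t * Q) \<longlongrightarrow> S) (at_right 0)"
    by (intro tendsto_eq_intros) auto
  show "\<forall>\<^sub>F t in at_right 0. 0 \<le> S + t * Q"
    unfolding eventually_at_right_field using assms by (intro exI[of _ 1]) auto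
qed simp

lemma sqnorm_on_le_inner_if_minimal_on_segment:
  assumes min: "\<And>t. 0 < t \<Longrightarrow> t \<le> 1 \<Longrightarrow>
    sqnorm_on P z \<le> sqnorm_on P (\<lambda>x. t * y x + (1 - t) * z x)"
  shows "sqnorm_on P z \<le> (\<Sum>x\<in>P. z x * y x)"
proof -
  define S where "S = (\<Sum>x\<in>P. z x * (y x - z x))"
  define Q where "Q = sqnorm_on P (\<lambda>x. y x - z x)"
  have expand: "sqnorm_on P (\<lambda>x. t * y x + (1 - t) * z x) = sqnorm_on P z + t * (2 * S + t * Q)"
    for t
  proof -
    have "(t * y x + (1 - t) * z x)\<^sup>2
        = (z x)\<^sup>2 + t * (2 * (z x * (y x - z x)) + t * (y x - z x)\<^sup>2)" for x
      by (simp add: power2_eq_square algebra_simps)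
    then show ?thesis
      by (simp add: sqnorm_on_def S_def Q_def sum.distrib sum_distrib_left distrib_left)
  qed
  have "0 \<le> 2 * S + t * Q" if "0 < t" "t \<le> 1" for t
    using min[OF that] that by (simp add: expand zero_le_mult_iff)
  then have "0 \<le> 2 * S"
    by (rule nonneg_if_nonneg_perturbations)
  moreover have "(\<Sum>x\<in>P. z x * y x) = S + sqnorm_on P z"
    unfolding S_def sqnorm_on_def by (simp add: power2_eq_square algebra_simps sum.distrib[symmetric])
  ultimately show ?thesis
    by linarith
qed

text \<open>By the parallelogram law, minimising sequences of \<open>sqnorm_on P\<close> on a convex set are
  Cauchy on \<open>P\<close>.\<close>

lemma minimizing_sequence_Cauchy:
  assumes P: "finite P" "x \<in> P" and D: "fun_convex D" and Y: "\<And>n. Y n \<in> D"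
    and d: "\<And>y. y \<in> D \<Longrightarrow> d \<le> sqnorm_on P y"
    and Y_min: "\<And>n. sqnorm_on P (Y n) < d + inverse (real (Suc n))"
  shows "Cauchy (\<lambda>n. Y n x)"
proof (rule metric_CauchyI)
  have square_diff: "(Y n x - Y k x)\<^sup>2 \<le> 2 * inverse (real (Suc n)) + 2 * inverse (real (Suc k))" for n k
  proof -
    define mid where "mid = (\<lambda>x. (1/2) * Y n x + (1 - 1/2) * Y k x)"
    have "mid \<in> D"
      unfolding mid_def by (rule fun_convexD[OF D Y Y]) auto
    have "(Y n x - Y k x)\<^sup>2 \<le> sqnorm_on P (\<lambda>x. Y n x - Y k x)"
      using P by (rule sqnorm_on_ge_square)
    also have "\<dots> = 2 * sqnorm_on P (Y n) + 2 * sqnorm_on P (Y k) - 4 * sqnorm_on P mid"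
    proof -
      have "(Y n x - Y k x)\<^sup>2 = 2 * (Y n x)\<^sup>2 + 2 * (Y k x)\<^sup>2 - 4 * (mid x)\<^sup>2" for x
        unfolding mid_def by (simp add: power2_eq_square algebra_simps)
      then show ?thesis
        by (simp add: sqnorm_on_def sum.distrib sum_subtractf sum_distrib_left)
    qed
    also have "\<dots> \<le> 2 * inverse (real (Suc n)) + 2 * inverse (real (Suc k))"
      using Y_min[of n] Y_min[of k] d[OF \<open>mid \<in> D\<close>] by linarith
    finally show ?thesis .
  qed
  fix \<epsilon> :: real assume "\<epsilon> > 0"
  then obtain N where N: "inverse (real (Suc N)) < \<epsilon>\<^sup>2 / 4"
    using reals_Archimedean[of "\<epsilon>\<^sup>2 / 4"] by auto
  have "dist (Y n x) (Y k x) < \<epsilon>" if "n \<ge> N" "k \<ge> N" for n k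
  proof -
    have "inverse (real (Suc n)) \<le> inverse (real (Suc N))" "inverse (real (Suc k)) \<le> inverse (real (Suc N))"
      using that by (simp_all add: le_imp_inverse_le)
    then have "(Y n x - Y k x)\<^sup>2 < \<epsilon>\<^sup>2"
      using square_diff[of n k] N by linarith
    then show ?thesis
      using power2_less_imp_less[of "\<bar>Y n x - Y k x\<bar>" \<epsilon>] \<open>\<epsilon> > 0\<close> by (simp add: dist_real_def)
  qed
  then show "\<exists>N. \<forall>n\<ge>N. \<forall>k\<ge>N. dist (Y n x) (Y k x) < \<epsilon>"
    by blast
qed


lemma convex_sqnorm_on_minimizing_limit:
  assumes P: "finite P" and D: "D \<noteq> {}" "fun_convex D"
  obtains Y z where "\<And>n. Y n \<in> D" "\<And>x. x \<in> P \<Longrightarrow> (\<lambda>n. Y n x) \<longlonglongrightarrow> z x"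
    and "sqnorm_on P z = Inf (sqnorm_on P ` D)"
proof -
  define d where "d = Inf (sqnorm_on P ` D)"
  have bdd: "bdd_below (sqnorm_on P ` D)"
    by (rule bdd_belowI[of _ 0]) (auto simp: sqnorm_on_nonneg)
  have d_le: "d \<le> sqnorm_on P y" if "y \<in> D" for y
    unfolding d_def using bdd that by (intro cInf_lower) auto
  have "\<exists>y\<in>D. sqnorm_on P y < d + inverse (real (Suc n))" for n
    using cInf_less_iff[OF _ bdd, of "d + inverse (real (Suc n))"] D by (auto simp: d_def)
  then obtain Y where Y: "\<And>n. Y n \<in> D" "\<And>n. sqnorm_on P (Y n) < d + inverse (real (Suc n))"
    by metis
  define z where "z x = lim (\<lambda>n. Y n x)" for x
  have Y_z: "(\<lambda>n. Y n x) \<longlonglongrightarrow> z x" if "x \<in> P" for x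
    using minimizing_sequence_Cauchy[OF P that D(2) Y(1) d_le Y(2)]
    by (simp add: z_def Cauchy_convergent_iff convergent_LIMSEQ_iff)
  have "(\<lambda>n. sqnorm_on P (Y n)) \<longlonglongrightarrow> sqnorm_on P z"
    unfolding sqnorm_on_def by (intro tendsto_sum tendsto_power Y_z)
  moreover have "(\<lambda>n. sqnorm_on P (Y n)) \<longlonglongrightarrow> d"
  proof (rule tendsto_sandwich[of "\<lambda>n. d" _ _ "\<lambda>n. d + inverse (real (Suc n))"])
    show "(\<lambda>n. d + inverse (real (Suc n))) \<longlonglongrightarrow> d"
      using tendsto_add[OF tendsto_const LIMSEQ_inverse_real_of_nat, of d] by simp
    show "\<forall>\<^sub>F n in sequentially. d \<le> sqnorm_on P (Y n)"
      using d_le Y(1) by simp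
    show "\<forall>\<^sub>F n in sequentially. sqnorm_on P (Y n) \<le> d + inverse (real (Suc n))"
      using Y(2) by (simp add: less_imp_le)
  qed simp
  ultimately have "sqnorm_on P z = Inf (sqnorm_on P ` D)"
    unfolding d_def by (rule LIMSEQ_unique)
  with Y(1) Y_z show thesis
    by (rule that)
qed

lemma separating_weights:
  assumes P: "finite P" and D: "D \<noteq> {}" "fun_convex D"
    and lower: "\<And>y. y \<in> D \<Longrightarrow> e \<le> sqnorm_on P y"
  obtains z where "\<And>y. y \<in> D \<Longrightarrow> e \<le> (\<Sum>x\<in>P. z x * y x)"
proof -
  obtain Y z where Y: "\<And>n. Y n \<in> D" and Y_z: "\<And>x. x \<in> P \<Longrightarrow> (\<lambda>n. Y n x) \<longlonglongrightarrow> z x"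
    and z_min: "sqnorm_on P z = Inf (sqnorm_on P ` D)"
    using convex_sqnorm_on_minimizing_limit[OF assms(1-3)] by blast
  have bdd: "bdd_below (sqnorm_on P ` D)"
    by (rule bdd_belowI[of _ 0]) (auto simp: sqnorm_on_nonneg)
  have "e \<le> sqnorm_on P z"
    unfolding z_min using D lower by (intro cInf_greatest) auto
  have "e \<le> (\<Sum>x\<in>P. z x * y x)" if y: "y \<in> D" for y
  proof -
    have "sqnorm_on P z \<le> sqnorm_on P (\<lambda>x. t * y x + (1 - t) * z x)" if "0 < t" "t \<le> 1" for t
    proof (rule LIMSEQ_le_const)
      show "(\<lambda>n. sqnorm_on P (\<lambda>x. t * y x + (1 - t) * Y n x))
          \<longlonglongrightarrow> sqnorm_on P (\<lambda>x. t * y x + (1 - t) * z x)"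
        unfolding sqnorm_on_def by (intro tendsto_intros Y_z)
      have "sqnorm_on P z \<le> sqnorm_on P (\<lambda>x. t * y x + (1 - t) * Y n x)" for n
        unfolding z_min using bdd fun_convexD[OF D(2) y Y] that by (intro cInf_lower) auto
      then show "\<exists>N. \<forall>n\<ge>N. sqnorm_on P z \<le> sqnorm_on P (\<lambda>x. t * y x + (1 - t) * Y n x)"
        by blast
    qed
    then have "sqnorm_on P z \<le> (\<Sum>x\<in>P. z x * y x)"
      by (rule sqnorm_on_le_inner_if_minimal_on_segment)
    then show ?thesis
      using \<open>e \<le> sqnorm_on P z\<close> by linarith
  qed
  then show thesis
    by (rule that)
qed

lemma fun_convex_differences:
  assumes "fun_convex A" "fun_convex K"
  shows "fun_convex {(\<lambda>x. a x - \<kappa> x) | a \<kappa>. a \<in> A \<and> \<kappa> \<in> K}"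
  unfolding fun_convex_def
proof (intro ballI allI impI)
  have diff_mem: "(\<lambda>x. a x - \<kappa> x) \<in> {(\<lambda>x. a x - \<kappa> x) | a \<kappa>. a \<in> A \<and> \<kappa> \<in> K}"
    if "a \<in> A" "\<kappa> \<in> K" for a \<kappa>
    using that by blast
  fix y1 y2 and t :: real
  assume "y1 \<in> {(\<lambda>x. a x - \<kappa> x) | a \<kappa>. a \<in> A \<and> \<kappa> \<in> K}"
    "y2 \<in> {(\<lambda>x. a x - \<kappa> x) | a \<kappa>. a \<in> A \<and> \<kappa> \<in> K}" and t: "0 \<le> t \<and> t \<le> 1"
  then obtain a1 a2 \<kappa>1 \<kappa>2 where "a1 \<in> A" "a2 \<in> A" "\<kappa>1 \<in> K" "\<kappa>2 \<in> K"
    and y: "y1 = (\<lambda>x. a1 x - \<kappa>1 x)" "y2 = (\<lambda>x. a2 x - \<kappa>2 x)"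
    by blast
  then have "(\<lambda>x. t * a1 x + (1 - t) * a2 x) \<in> A" "(\<lambda>x. t * \<kappa>1 x + (1 - t) * \<kappa>2 x) \<in> K"
    using t fun_convexD[OF assms(1)] fun_convexD[OF assms(2)] by auto
  from diff_mem[OF this]
  show "(\<lambda>x. t * y1 x + (1 - t) * y2 x) \<in> {(\<lambda>x. a x - \<kappa> x) | a \<kappa>. a \<in> A \<and> \<kappa> \<in> K}"
    unfolding y by (simp add: algebra_simps)
qed

text \<open>Otherwise a large multiple of \<open>c\<close> in the cone would violate the bound.\<close>

lemma sum_weights_nonpos_on_generators:
  assumes bound: "\<And>\<kappa>. \<kappa> \<in> cone_fam F \<Longrightarrow> e \<le> (\<Sum>x\<in>P. z x * (a x - \<kappa> x))"
    and c: "c \<in> \<Union>F"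
  shows "(\<Sum>x\<in>P. z x * c x) \<le> 0"
proof (rule ccontr)
  assume "\<not> ?thesis"
  then have pos: "0 < (\<Sum>x\<in>P. z x * c x)"
    by simp
  define s where "s = (\<bar>\<Sum>x\<in>P. z x * a x\<bar> + \<bar>e\<bar> + 1) / (\<Sum>x\<in>P. z x * c x)"
  have "(\<lambda>x. s * c x) \<in> cone_fam F"
    unfolding s_def using c pos by (intro cone_fam_scale cone_fam_base) auto
  then have "e \<le> (\<Sum>x\<in>P. z x * (a x - s * c x))"
    by (rule bound)
  also have "\<dots> = (\<Sum>x\<in>P. z x * a x) - s * (\<Sum>x\<in>P. z x * c x)"
    by (simp add: algebra_simps sum_subtractf sum_distrib_left)
  also have "\<dots> = (\<Sum>x\<in>P. z x * a x) - (\<bar>\<Sum>x\<in>P. z x * a x\<bar> + \<bar>e\<bar> + 1)"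
    unfolding s_def using pos by simp
  finally show False
    using abs_ge_self[of e] abs_ge_self[of "\<Sum>x\<in>P. z x * a x"] by linarith
qed

lemma linear_apply_combination:
  "linear a \<Longrightarrow> a (\<Sum>x\<in>P. z x *\<^sub>R x) = (\<Sum>x\<in>P. z x * a x)"
  by (simp add: linear_sum linear_scale)

text \<open>A weak* continuous separating functional is evaluation at a point \<open>p\<close>. It is obtained by
  restricting to finitely many points where \<open>A\<close> stays away from the cone and taking the
  element of least norm in the convex set \<open>A - cone\<close> there.\<close>

lemma separation_from_cone:
  fixes A :: "('a::real_vector \<Rightarrow> real) set" and F :: "('a \<Rightarrow> real) set set"
  assumes A: "compact A" "A \<noteq> {}" "fun_convex A" "\<And>a. a \<in> A \<Longrightarrow> linear a"
    and F: "\<And>c. c \<in> \<Union>F \<Longrightarrow> linear c"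
    and disjoint: "A \<inter> closure (cone_fam F) = {}"
  obtains p where "\<And>a. a \<in> A \<Longrightarrow> a p \<le> -1" "\<And>c. c \<in> \<Union>F \<Longrightarrow> 0 \<le> c p"
proof -
  define K where "K = cone_fam F"
  obtain P \<epsilon> where P: "finite P" "\<epsilon> > 0"
    and apart: "\<And>a \<kappa>. a \<in> A \<Longrightarrow> \<kappa> \<in> K \<Longrightarrow> \<exists>x\<in>P. \<epsilon> \<le> \<bar>a x - \<kappa> x\<bar>"
    using compact_apart_from_closure_on_finite_set[OF A(1) disjoint[folded K_def]] by blast
  define D where "D = {(\<lambda>x. a x - \<kappa> x) | a \<kappa>. a \<in> A \<and> \<kappa> \<in> K}"
  have K0: "(\<lambda>x. 0) \<in> K"
    unfolding K_def by (rule cone_fam_zero)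
  obtain a0 where a0: "a0 \<in> A"
    using A(2) by auto
  have "D \<noteq> {}"
    unfolding D_def using a0 K0 by blast
  have in_D: "(\<lambda>x. a x - \<kappa> x) \<in> D" if "a \<in> A" "\<kappa> \<in> K" for a \<kappa>
    unfolding D_def using that by blast
  have "fun_convex D"
    unfolding D_def K_def using A(3) fun_convex_cone_fam by (rule fun_convex_differences)
  moreover have "\<epsilon>\<^sup>2 \<le> sqnorm_on P y" if "y \<in> D" for y
  proof -
    obtain a \<kappa> where "a \<in> A" "\<kappa> \<in> K" "y = (\<lambda>x. a x - \<kappa> x)"
      using \<open>y \<in> D\<close> unfolding D_def by blast
    then obtain x where "x \<in> P" "\<epsilon> \<le> \<bar>y x\<bar>"
      using apart by auto
    then have "\<epsilon>\<^sup>2 \<le> (y x)\<^sup>2"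
      using P(2) by (metis abs_le_square_iff abs_of_pos)
    also have "\<dots> \<le> sqnorm_on P y"
      using P(1) \<open>x \<in> P\<close> by (rule sqnorm_on_ge_square)
    finally show ?thesis .
  qed
  ultimately obtain z where z: "\<And>y. y \<in> D \<Longrightarrow> \<epsilon>\<^sup>2 \<le> (\<Sum>x\<in>P. z x * y x)"
    using separating_weights[OF P(1) \<open>D \<noteq> {}\<close>] by blast
  have z_A: "\<epsilon>\<^sup>2 \<le> (\<Sum>x\<in>P. z x * a x)" if "a \<in> A" for a
    using z[OF in_D[OF that K0]] by simp
  have "\<epsilon>\<^sup>2 \<le> (\<Sum>x\<in>P. z x * (a0 x - \<kappa> x))" if "\<kappa> \<in> cone_fam F" for \<kappa>
    using z[OF in_D[OF a0 that[folded K_def]]] by simp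
  then have z_F: "(\<Sum>x\<in>P. z x * c x) \<le> 0" if "c \<in> \<Union>F" for c
    using that by (rule sum_weights_nonpos_on_generators)
  define p where "p = (- 1 / \<epsilon>\<^sup>2) *\<^sub>R (\<Sum>x\<in>P. z x *\<^sub>R x)"
  have p_eval: "c p = - (\<Sum>x\<in>P. z x * c x) / \<epsilon>\<^sup>2" if "linear c" for c
    unfolding p_def linear_scale[OF that] linear_apply_combination[OF that] by simp
  show thesis
  proof (rule that)
    show "a p \<le> -1" if "a \<in> A" for a
      using z_A[OF that] P(2) by (simp add: p_eval A(4)[OF that] divide_le_eq)
    show "0 \<le> c p" if "c \<in> \<Union>F" for c
      using z_F[OF that] by (simp add: p_eval F[OF that] divide_nonpos_nonneg)
  qed
qed

lemma separating_directions:
  assumes E: "\<And>k. k \<in> I \<Longrightarrow> wstar_convex_compact (E k) \<and> E k \<subseteq> C k"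
    and lin: "\<And>j c. j \<in> I \<Longrightarrow> c \<in> C j \<Longrightarrow> linear c"
    and disjoint: "\<And>k. k \<in> I \<Longrightarrow>
      C k \<inter> wstar_closure (cone_fam {fneg (C j) | j. j \<in> I \<and> j \<noteq> k}) = {}"
  obtains p where "\<And>k a. k \<in> I \<Longrightarrow> a \<in> E k \<Longrightarrow> a (p k) \<le> -1"
    and "\<And>k j c. k \<in> I \<Longrightarrow> j \<in> I \<Longrightarrow> j \<noteq> k \<Longrightarrow> c \<in> C j \<Longrightarrow> c (p k) \<le> 0"
proof -
  have "\<exists>p. (\<forall>a\<in>E k. a p \<le> -1) \<and> (\<forall>j\<in>I. j \<noteq> k \<longrightarrow> (\<forall>c\<in>C j. c p \<le> 0))" if k: "k \<in> I" for k
  proof -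
    define F where "F = {fneg (C j) | j. j \<in> I \<and> j \<noteq> k}"
    have E_props: "compact (E k)" "E k \<noteq> {}" "fun_convex (E k)" "\<And>a. a \<in> E k \<Longrightarrow> linear a"
      using E[OF k] by (auto simp: wstar_convex_compact_iff dual_space_linear)
    have F_linear: "linear c" if "c \<in> \<Union>F" for c
      using that lin by (auto simp: F_def fneg_def intro: linear_compose_neg)
    have "E k \<inter> closure (cone_fam F) = {}"
      using E[OF k] disjoint[OF k] by (auto simp: F_def wstar_closure_def wstar_convex_compact_def)
    then obtain p where p: "\<And>a. a \<in> E k \<Longrightarrow> a p \<le> -1" "\<And>c. c \<in> \<Union>F \<Longrightarrow> 0 \<le> c p"
      using separation_from_cone[OF E_props F_linear] by metis
    have "c p \<le> 0" if "j \<in> I" "j \<noteq> k" "c \<in> C j" for j c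
      using p(2)[of "\<lambda>x. - c x"] that by (auto simp: F_def fneg_def)
    then show ?thesis
      using p(1) by blast
  qed
  then obtain p where "\<And>k. k \<in> I \<Longrightarrow>
      (\<forall>a\<in>E k. a (p k) \<le> -1) \<and> (\<forall>j\<in>I. j \<noteq> k \<longrightarrow> (\<forall>c\<in>C j. c (p k) \<le> 0))"
    by metis
  then show thesis
    using that by blast
qed

section \<open>Outward vector fields on a ball have zeros\<close>

text \<open>Points of \<open>\<real>\<^sup>m\<close> are functions \<open>nat \<Rightarrow> real\<close> vanishing from \<open>m\<close> on, as in
  \<open>nsphere\<close>.\<close>

definition fin_ball :: "nat \<Rightarrow> (nat \<Rightarrow> real) set" where
  "fin_ball m = {t. (\<forall>i\<ge>m. t i = 0) \<and> (\<Sum>i<m. (t i)\<^sup>2) \<le> 1}"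

definition fin_sphere :: "nat \<Rightarrow> (nat \<Rightarrow> real) set" where
  "fin_sphere m = {t. (\<forall>i\<ge>m. t i = 0) \<and> (\<Sum>i<m. (t i)\<^sup>2) = 1}"

definition fin_norm :: "nat \<Rightarrow> (nat \<Rightarrow> real) \<Rightarrow> real" where
  "fin_norm m y = sqrt (\<Sum>i<m. (y i)\<^sup>2)"

definition fin_normalize :: "nat \<Rightarrow> (nat \<Rightarrow> real) \<Rightarrow> nat \<Rightarrow> real" where
  "fin_normalize m y = (\<lambda>i. if i < m then y i / fin_norm m y else 0)"

lemma fin_sphere_subset_ball: "fin_sphere m \<subseteq> fin_ball m"
  unfolding fin_sphere_def fin_ball_def by auto

lemma abs_le_1_if_fin_ball: "t \<in> fin_ball m \<Longrightarrow> \<bar>t i\<bar> \<le> 1"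
proof (cases "i < m")
  case True
  assume t: "t \<in> fin_ball m"
  have "(t i)\<^sup>2 \<le> (\<Sum>i<m. (t i)\<^sup>2)"
    using True by (intro member_le_sum) auto
  also have "\<dots> \<le> 1"
    using t by (simp add: fin_ball_def)
  finally show ?thesis
    by (simp add: abs_square_le_1)
qed (simp add: fin_ball_def)

lemma compact_fin_ball: "compact (fin_ball m)"
proof -
  define box where "box = Pi\<^sub>E UNIV (\<lambda>i. if i < m then {-1..1::real} else {0})"
  have "compactin (product_topology (\<lambda>i. euclidean) UNIV) box"
    unfolding box_def compactin_PiE by (auto simp: compactin_euclidean_iff)
  then have "compact box"
    by (simp add: euclidean_product_topology compactin_euclidean_iff)
  moreover have "closed (fin_ball m)"
  proof -
    have "fin_ball m = (\<Inter>i\<in>{m..}. {t. t i = 0}) \<inter> {t. (\<Sum>i<m. (t i)\<^sup>2) \<le> 1}"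
      unfolding fin_ball_def by auto
    moreover have "closed {t :: nat \<Rightarrow> real. t i = 0}" for i
      by (intro closed_Collect_eq continuous_intros)
    moreover have "closed {t :: nat \<Rightarrow> real. (\<Sum>i<m. (t i)\<^sup>2) \<le> 1}"
      by (intro closed_Collect_le continuous_intros)
    ultimately show ?thesis
      by (simp add: closed_INT closed_Int)
  qed
  moreover have "fin_ball m \<subseteq> box"
  proof
    fix t assume t: "t \<in> fin_ball m"
    then have "\<bar>t i\<bar> \<le> 1" for i
      by (rule abs_le_1_if_fin_ball)
    then show "t \<in> box"
      using t by (auto simp: box_def fin_ball_def abs_le_iff)
  qed
  ultimately show ?thesis
    using compact_Int_closed[of box "fin_ball m"] by (simp add: Int_absorb1)
qed

lemma not_contractible_fin_sphere:
  assumes "m \<ge> 1"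
  shows "\<not> contractible (fin_sphere m)"
proof -
  have "{..m - 1} = {..<m}"
    using assms by auto
  moreover have "(\<forall>i>m - 1. x i = 0) \<longleftrightarrow> (\<forall>i\<ge>m. x i = 0)" for x :: "nat \<Rightarrow> real"
    using assms by (metis Suc_le_eq Suc_pred' le_less_trans less_one not_less)
  ultimately have "nsphere (m - 1) = top_of_set (fin_sphere m)"
    unfolding nsphere fin_sphere_def euclidean_product_topology by (simp add: conj_commute)
  then show ?thesis
    using non_contractible_space_nsphere[of "m - 1"] by simp
qed

lemma fin_norm_pos: "i < m \<Longrightarrow> y i \<noteq> 0 \<Longrightarrow> 0 < fin_norm m y"
proof -
  assume "i < m" "y i \<noteq> 0"
  then have "0 < (y i)\<^sup>2"
    by simp
  also have "(y i)\<^sup>2 \<le> (\<Sum>i<m. (y i)\<^sup>2)"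
    using \<open>i < m\<close> by (intro member_le_sum) auto
  finally show ?thesis
    by (simp add: fin_norm_def)
qed

lemma fin_normalize_in_sphere:
  assumes "0 < fin_norm m y"
  shows "fin_normalize m y \<in> fin_sphere m"
proof -
  have "(\<Sum>i<m. (fin_normalize m y i)\<^sup>2) = (\<Sum>i<m. (y i)\<^sup>2) / (fin_norm m y)\<^sup>2"
    by (simp add: fin_normalize_def power_divide sum_divide_distrib)
  also have "\<dots> = 1"
    using assms by (simp add: fin_norm_def sum_nonneg)
  finally show ?thesis
    by (simp add: fin_sphere_def fin_normalize_def)
qed

lemma fin_normalize_fin_sphere: "t \<in> fin_sphere m \<Longrightarrow> fin_normalize m t = t"
  unfolding fin_sphere_def fin_normalize_def fin_norm_def by auto

lemma continuous_on_fin_normalize: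
  assumes "\<And>i. i < m \<Longrightarrow> continuous_on S (\<lambda>s. y s i)" "\<And>s. s \<in> S \<Longrightarrow> 0 < fin_norm m (y s)"
  shows "continuous_on S (\<lambda>s. fin_normalize m (y s))"
proof (rule continuous_on_coordinatewise_then_product)
  fix i
  have "continuous_on S (\<lambda>s. fin_norm m (y s))"
    unfolding fin_norm_def by (intro continuous_intros assms(1)) auto
  then show "continuous_on S (\<lambda>s. fin_normalize m (y s) i)"
  proof (cases "i < m")
    case True
    have "continuous_on S (\<lambda>s. y s i / fin_norm m (y s))"
      by (rule continuous_on_divide[OF assms(1)[OF True] \<open>continuous_on S _\<close>])
        (use assms(2) in force)
    then show ?thesis
      using True by (simp add: fin_normalize_def)
  qed (simp add: fin_normalize_def)
qed

lemma homotopic_with_canonI: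
  fixes h :: "real \<times> 'a::topological_space \<Rightarrow> 'b::topological_space"
  assumes "continuous_on ({0..1} \<times> S) h" "h ` ({0..1} \<times> S) \<subseteq> T"
    "\<And>x. x \<in> S \<Longrightarrow> h (0, x) = f x" "\<And>x. x \<in> S \<Longrightarrow> h (1, x) = g x"
  shows "homotopic_with_canon (\<lambda>_. True) S T f g"
  by (subst homotopic_with) (use assms in \<open>auto intro!: exI[of _ h]\<close>)

lemma continuous_on_snd_apply [continuous_intros]:
  "continuous_on S (\<lambda>p. snd p i :: real)"
  by (intro continuous_on_compose2[OF continuous_on_apply continuous_on_snd]) auto

text \<open>On the sphere, the segment from \<open>t\<close> to an outward \<open>g t\<close> avoids the origin.\<close>

lemma homotopic_id_normalized_outward_field:
  assumes m: "m \<ge> 1" and g: "\<And>i. i < m \<Longrightarrow> continuous_on (fin_ball m) (\<lambda>t. g t i)"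
    and outward: "\<And>t. t \<in> fin_sphere m \<Longrightarrow> 0 < (\<Sum>i<m. t i * g t i)"
  shows "homotopic_with_canon (\<lambda>_. True) (fin_sphere m) (fin_sphere m)
    id (\<lambda>t. fin_normalize m (g t))"
proof -
  define y where "y p = (\<lambda>i. (1 - fst p) * snd p i + fst p * g (snd p) i)" for p
  have y_pos: "0 < fin_norm m (y p)" if p: "p \<in> {0..1} \<times> fin_sphere m" for p
  proof -
    obtain s t where st: "p = (s, t)" "0 \<le> s" "s \<le> 1" "t \<in> fin_sphere m"
      using p by auto
    have "(\<Sum>i<m. t i * y p i) = (\<Sum>i<m. (1 - s) * (t i)\<^sup>2 + s * (t i * g t i))"
      unfolding y_def st(1) by (intro sum.cong) (simp_all add: power2_eq_square algebra_simps)
    also have "\<dots> = (1 - s) * (\<Sum>i<m. (t i)\<^sup>2) + s * (\<Sum>i<m. t i * g t i)"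
      by (simp add: sum.distrib sum_distrib_left)
    also have "\<dots> = (1 - s) + s * (\<Sum>i<m. t i * g t i)"
      using st(4) by (simp add: fin_sphere_def)
    also have "\<dots> > 0"
      using st(2,3) outward[OF st(4)]
      by (cases "s = 0") (auto intro: add_nonneg_pos add_pos_nonneg)
    finally obtain i where "i < m" "y p i \<noteq> 0"
      by (metis (no_types, lifting) lessThan_iff mult_zero_right sum.neutral order.irrefl)
    then show ?thesis
      by (rule fin_norm_pos)
  qed
  show ?thesis
  proof (rule homotopic_with_canonI[where h = "\<lambda>p. fin_normalize m (y p)"])
    show "continuous_on ({0..1} \<times> fin_sphere m) (\<lambda>p. fin_normalize m (y p))"
    proof (rule continuous_on_fin_normalize)
      fix i assume "i < m"
      have "continuous_on ({0..1} \<times> fin_sphere m) (\<lambda>p. g (snd p) i)"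
        using fin_sphere_subset_ball
        by (intro continuous_on_compose2[OF g[OF \<open>i < m\<close>] continuous_on_snd]) auto
      then show "continuous_on ({0..1} \<times> fin_sphere m) (\<lambda>p. y p i)"
        unfolding y_def by (intro continuous_intros)
    qed (use y_pos in auto)
    show "(\<lambda>p. fin_normalize m (y p)) ` ({0..1} \<times> fin_sphere m) \<subseteq> fin_sphere m"
      using y_pos fin_normalize_in_sphere by blast
    show "fin_normalize m (y (0, t)) = id t" if "t \<in> fin_sphere m" for t
      using fin_normalize_fin_sphere[OF that] by (simp add: y_def)
    show "fin_normalize m (y (1, t)) = fin_normalize m (g t)" for t
      by (simp add: y_def)
  qed
qed

lemma homotopic_const_normalized_field:
  assumes g: "\<And>i. i < m \<Longrightarrow> continuous_on (fin_ball m) (\<lambda>t. g t i)"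
    and nonzero: "\<And>t. t \<in> fin_ball m \<Longrightarrow> 0 < fin_norm m (g t)"
  shows "homotopic_with_canon (\<lambda>_. True) (fin_sphere m) (fin_sphere m)
    (\<lambda>t. fin_normalize m (g (\<lambda>_. 0))) (\<lambda>t. fin_normalize m (g t))"
proof -
  define y where "y p = (\<lambda>j. fst p * snd p j)" for p :: "real \<times> (nat \<Rightarrow> real)"
  have y_ball: "y p \<in> fin_ball m" if p: "p \<in> {0..1} \<times> fin_sphere m" for p
  proof -
    obtain s t where st: "p = (s, t)" "0 \<le> s" "s \<le> 1" "t \<in> fin_sphere m"
      using p by auto
    have "(\<Sum>i<m. (s * t i)\<^sup>2) = s\<^sup>2 * (\<Sum>i<m. (t i)\<^sup>2)"
      by (simp add: power_mult_distrib sum_distrib_left)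
    also have "\<dots> \<le> 1"
      using st by (simp add: fin_sphere_def power_le_one)
    finally show ?thesis
      using st by (simp add: y_def fin_ball_def fin_sphere_def)
  qed
  show ?thesis
  proof (rule homotopic_with_canonI[where h = "\<lambda>p. fin_normalize m (g (y p))"])
    show "continuous_on ({0..1} \<times> fin_sphere m) (\<lambda>p. fin_normalize m (g (y p)))"
    proof (rule continuous_on_fin_normalize)
      fix i assume "i < m"
      have "continuous_on ({0..1} \<times> fin_sphere m) y"
        unfolding y_def by (intro continuous_intros)
      then show "continuous_on ({0..1} \<times> fin_sphere m) (\<lambda>p. g (y p) i)"
        using y_ball by (intro continuous_on_compose2[OF g[OF \<open>i < m\<close>]]) auto
    qed (use y_ball nonzero in auto)
    show "(\<lambda>p. fin_normalize m (g (y p))) ` ({0..1} \<times> fin_sphere m) \<subseteq> fin_sphere m"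
      using y_ball nonzero fin_normalize_in_sphere by blast
    show "fin_normalize m (g (y (0, t))) = fin_normalize m (g (\<lambda>_. 0))" for t
      by (simp add: y_def)
    show "fin_normalize m (g (y (1, t))) = fin_normalize m (g t)" for t
      by (simp add: y_def)
  qed
qed

theorem outward_field_has_zero:
  assumes m: "m \<ge> 1" and g: "\<And>i. i < m \<Longrightarrow> continuous_on (fin_ball m) (\<lambda>t. g t i)"
    and outward: "\<And>t. t \<in> fin_sphere m \<Longrightarrow> 0 < (\<Sum>i<m. t i * g t i)"
  obtains t where "t \<in> fin_ball m" "\<And>i. i < m \<Longrightarrow> g t i = 0"
proof (rule ccontr)
  assume "\<not> thesis"
  then have "\<forall>t\<in>fin_ball m. \<exists>i<m. g t i \<noteq> 0"
    using that by blast
  then have "0 < fin_norm m (g t)" if "t \<in> fin_ball m" for t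
    using that fin_norm_pos by blast
  then have "homotopic_with_canon (\<lambda>_. True) (fin_sphere m) (fin_sphere m)
      id (\<lambda>t. fin_normalize m (g (\<lambda>_. 0)))"
    using homotopic_with_trans[OF homotopic_id_normalized_outward_field[OF m g outward]
        homotopic_with_symD[OF homotopic_const_normalized_field[OF g]]]
    by blast
  then have "contractible (fin_sphere m)"
    unfolding contractible_def by blast
  then show False
    using not_contractible_fin_sphere[OF m] by simp
qed

lemma dderiv_tendsto:
  assumes "dir_diff f x"
  shows "((\<lambda>\<alpha>. (f (x + \<alpha> *\<^sub>R v) - f x) / \<alpha>) \<longlongrightarrow> dderiv f x v) (at_right 0)"
proof -
  obtain L where L: "((\<lambda>\<alpha>. (f (x + \<alpha> *\<^sub>R v) - f x) / \<alpha>) \<longlongrightarrow> L) (at_right 0)"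
    using assms unfolding dir_diff_def by blast
  moreover from L have "dderiv f x v = L"
    unfolding dderiv_def by (rule tendsto_Lim[OF trivial_limit_at_right_real])
  ultimately show ?thesis
    by simp
qed

lemma eventually_at_right_0_less: "0 < b \<Longrightarrow> \<forall>\<^sub>F \<alpha> in at_right (0::real). \<alpha> < b"
  unfolding eventually_at_right_field by (intro exI[of _ b]) auto

lemma dir_diff_unif_uniformly_on_compact:
  fixes f :: "'a::real_normed_vector \<Rightarrow> real"
  assumes f: "dir_diff_unif f x" and V: "compact V" and W: "finite W"
    and spans: "\<And>v w. v \<in> V \<Longrightarrow> w \<in> V \<Longrightarrow> v - w \<in> span W" and "\<epsilon> > 0"
  shows "\<forall>\<^sub>F \<alpha> in at_right 0. \<forall>v\<in>V. \<bar>(f (x + \<alpha> *\<^sub>R v) - f x) / \<alpha> - dderiv f x v\<bar> < \<epsilon>"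
proof -
  define Q where "Q \<alpha> v = (f (x + \<alpha> *\<^sub>R v) - f x) / \<alpha>" for \<alpha> v
  have unif: "\<And>v0 B e. finite B \<Longrightarrow> e > 0 \<Longrightarrow>
      \<exists>\<delta>>0. \<forall>\<alpha> v. 0 < \<alpha> \<and> \<alpha> < \<delta> \<and> v - v0 \<in> span B \<and> norm (v - v0) < \<delta> \<longrightarrow>
        \<bar>Q \<alpha> v - dderiv f x v0\<bar> < e"
    using f unfolding dir_diff_unif_def Q_def by blast
  have "\<exists>\<delta>>0. \<forall>\<alpha> v. 0 < \<alpha> \<and> \<alpha> < \<delta> \<and> v - v0 \<in> span W \<and> norm (v - v0) < \<delta> \<longrightarrow>
      \<bar>Q \<alpha> v - dderiv f x v0\<bar> < \<epsilon> / 2" for v0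
    using \<open>\<epsilon> > 0\<close> by (intro unif W) simp
  then obtain \<delta> where \<delta>: "\<And>v0. \<delta> v0 > 0"
    "\<And>v0 \<alpha> v. 0 < \<alpha> \<Longrightarrow> \<alpha> < \<delta> v0 \<Longrightarrow> v - v0 \<in> span W \<Longrightarrow> norm (v - v0) < \<delta> v0 \<Longrightarrow>
      \<bar>Q \<alpha> v - dderiv f x v0\<bar> < \<epsilon> / 2"
    by metis
  have near: "\<bar>dderiv f x v - dderiv f x v0\<bar> \<le> \<epsilon> / 2"
    if "v0 \<in> V" "v \<in> V" "norm (v - v0) < \<delta> v0" for v v0
  proof (rule tendsto_upperbound)
    show "((\<lambda>\<alpha>. \<bar>Q \<alpha> v - dderiv f x v0\<bar>) \<longlongrightarrow> \<bar>dderiv f x v - dderiv f x v0\<bar>) (at_right 0)"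
      using f unfolding Q_def dir_diff_unif_def by (intro tendsto_intros dderiv_tendsto) auto
    show "\<forall>\<^sub>F \<alpha> in at_right 0. \<bar>Q \<alpha> v - dderiv f x v0\<bar> \<le> \<epsilon> / 2"
      unfolding eventually_at_right_field using \<delta> that spans
      by (intro exI[of _ "\<delta> v0"]) (auto intro: less_imp_le)
  qed simp
  obtain T where T: "T \<subseteq> V" "finite T" "V \<subseteq> (\<Union>v0\<in>T. ball v0 (\<delta> v0))"
    using compactE_image[OF V, of V "\<lambda>v0. ball v0 (\<delta> v0)"] \<delta>(1) by force
  have "\<forall>\<^sub>F \<alpha> in at_right 0. 0 < \<alpha> \<and> (\<forall>v0\<in>T. \<alpha> < \<delta> v0)"
    using T(2) \<delta>(1)
    by (intro eventually_conj eventually_at_right_less eventually_ball_finite ballI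
        eventually_at_right_0_less)
  then show ?thesis
  proof (rule eventually_mono, intro ballI)
    fix \<alpha> v assume \<alpha>: "0 < \<alpha> \<and> (\<forall>v0\<in>T. \<alpha> < \<delta> v0)" and "v \<in> V"
    then obtain v0 where "v0 \<in> T" "norm (v - v0) < \<delta> v0"
      using T(3) by (auto simp: dist_norm norm_minus_commute)
    then have "\<bar>Q \<alpha> v - dderiv f x v0\<bar> < \<epsilon> / 2" "\<bar>dderiv f x v - dderiv f x v0\<bar> \<le> \<epsilon> / 2"
      using \<delta>(2) near \<alpha> T(1) spans \<open>v \<in> V\<close> by auto
    then show "\<bar>(f (x + \<alpha> *\<^sub>R v) - f x) / \<alpha> - dderiv f x v\<bar> < \<epsilon>"
      unfolding Q_def by linarith
  qed
qed

section \<open>Zeros along a sweep of directions\<close>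

locale lyusternik_setting =
  fixes f :: "nat \<Rightarrow> 'a::real_normed_vector \<Rightarrow> real" and m :: nat and x v :: 'a
    and A B :: "nat \<Rightarrow> ('a \<Rightarrow> real) set" and p q :: "nat \<Rightarrow> 'a"
  assumes m_pos: "m \<ge> 1"
    and f_zero: "\<And>k. k \<in> {1..m} \<Longrightarrow> f k x = 0"
    and f_cont: "\<And>k. k \<in> {1..m} \<Longrightarrow> \<exists>r>0. continuous_on (ball x r) (f k)"
    and f_diff: "\<And>k. k \<in> {1..m} \<Longrightarrow> dir_diff_unif (f k) x"
    and dderiv_le: "\<And>k w. k \<in> {1..m} \<Longrightarrow> dderiv (f k) x w \<le> supp (A k) w"
    and dderiv_ge: "\<And>k w. k \<in> {1..m} \<Longrightarrow> - supp (B k) w \<le> dderiv (f k) x w"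
    and AB: "\<And>k. k \<in> {1..m} \<Longrightarrow> wstar_convex_compact (A k) \<and> wstar_convex_compact (B k)"
    and v_dir: "\<And>k. k \<in> {1..m} \<Longrightarrow> supp (A k) v \<le> 0 \<and> supp (B k) v \<le> 0"
    and p_dir: "\<And>k a. k \<in> {1..m} \<Longrightarrow> a \<in> A k \<Longrightarrow> a (p k) \<le> -1"
    and q_dir: "\<And>k b. k \<in> {1..m} \<Longrightarrow> b \<in> B k \<Longrightarrow> b (q k) \<le> -1"
    and pq_other: "\<And>k j a. k \<in> {1..m} \<Longrightarrow> j \<in> {1..m} \<Longrightarrow> j \<noteq> k \<Longrightarrow> a \<in> A j \<union> B j \<Longrightarrow>
      a (p k) \<le> 0 \<and> a (q k) \<le> 0"
begin

lemma functional_props: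
  assumes "k \<in> {1..m}" "a \<in> A k \<union> B k"
  shows "linear a" "a v \<le> 0"
proof -
  have "A k \<union> B k \<subseteq> dual_space" "compact (A k)" "compact (B k)"
    using AB[OF assms(1)] by (auto simp: wstar_convex_compact_iff)
  then show "linear a" "a v \<le> 0"
    using assms v_dir[OF assms(1)] supp_upper[of "A k" a v] supp_upper[of "B k" a v]
    by (auto intro: dual_space_linear)
qed

text \<open>The sweep is indexed by \<open>j < m\<close> while the functions are indexed by \<open>k = Suc j\<close>.
  Moving from \<open>v\<close> along \<open>q k\<close> raises the lower bound of \<open>f k\<close> and along \<open>p k\<close> lowers its
  upper bound, without raising the upper bounds of the other \<open>f j\<close>.\<close>

definition sweep :: "real \<Rightarrow> (nat \<Rightarrow> real) \<Rightarrow> 'a" where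
  "sweep \<eta> t = v + \<eta> *\<^sub>R (\<Sum>j<m. max (t j) 0 *\<^sub>R q (Suc j) + max (- t j) 0 *\<^sub>R p (Suc j))"

lemma continuous_on_sweep: "continuous_on S (sweep \<eta>)"
  unfolding sweep_def by (intro continuous_intros)

lemma sweep_minus_in_span:
  "sweep \<eta> t - sweep \<eta> s \<in> span (p ` {1..m} \<union> q ` {1..m})"
proof -
  have "(\<Sum>j<m. max (t j) 0 *\<^sub>R q (Suc j) + max (- t j) 0 *\<^sub>R p (Suc j))
      \<in> span (p ` {1..m} \<union> q ` {1..m})" for t
    by (intro span_sum span_add span_scale span_base) auto
  then show ?thesis
    unfolding sweep_def by (simp add: span_diff span_scale flip: scaleR_diff_right)
qed

lemma norm_sweep_minus_le:
  assumes "t \<in> fin_ball m" "\<eta> \<ge> 0"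
  shows "norm (sweep \<eta> t - v) \<le> \<eta> * (\<Sum>j<m. norm (q (Suc j)) + norm (p (Suc j)))"
proof -
  have "norm (max (t j) 0 *\<^sub>R q (Suc j) + max (- t j) 0 *\<^sub>R p (Suc j))
      \<le> norm (q (Suc j)) + norm (p (Suc j))" for j
  proof -
    have "\<bar>max (t j) 0\<bar> \<le> 1" "\<bar>max (- t j) 0\<bar> \<le> 1"
      using abs_le_1_if_fin_ball[OF assms(1), of j] by auto
    then show ?thesis
      by (intro norm_triangle_le add_mono) (auto intro: mult_left_le_one_le)
  qed
  then have "norm (\<Sum>j<m. max (t j) 0 *\<^sub>R q (Suc j) + max (- t j) 0 *\<^sub>R p (Suc j))
      \<le> (\<Sum>j<m. norm (q (Suc j)) + norm (p (Suc j)))"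
    by (intro norm_sum[THEN order_trans] sum_mono)
  then show ?thesis
    unfolding sweep_def using assms(2) by (simp add: mult_left_mono)
qed

lemma apply_sweep_le:
  assumes i: "i < m" and a: "a \<in> A (Suc i) \<union> B (Suc i)" and "\<eta> \<ge> 0"
  shows "a (sweep \<eta> t) \<le> \<eta> * (max (t i) 0 * a (q (Suc i)) + max (- t i) 0 * a (p (Suc i)))"
proof -
  have k: "Suc i \<in> {1..m}"
    using i by simp
  note a_props = functional_props[OF k a]
  define T where "T j = max (t j) 0 * a (q (Suc j)) + max (- t j) 0 * a (p (Suc j))" for j
  have "a (sweep \<eta> t) = a v + \<eta> * (\<Sum>j<m. T j)"
    unfolding sweep_def T_def using a_props(1)
    by (simp add: linear_add linear_scale linear_sum sum_distrib_left distrib_left mult.assoc)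
  also have "(\<Sum>j<m. T j) = T i + (\<Sum>j\<in>{..<m} - {i}. T j)"
    using i by (intro sum.remove) auto
  also have "(\<Sum>j\<in>{..<m} - {i}. T j) \<le> 0"
    using pq_other[OF _ k _ a] unfolding T_def
    by (intro sum_nonpos) (auto intro!: add_nonpos_nonpos mult_nonneg_nonpos)
  finally show ?thesis
    using a_props(2) \<open>\<eta> \<ge> 0\<close> unfolding T_def by (simp add: mult_left_mono)
qed

lemma sweep_sign:
  assumes i: "i < m" and "\<eta> \<ge> 0"
  shows "\<eta> * (t i)\<^sup>2 \<le> t i * dderiv (f (Suc i)) x (sweep \<eta> t)"
proof -
  have k: "Suc i \<in> {1..m}"
    using i by simp
  then have nonempty: "A (Suc i) \<noteq> {}" "B (Suc i) \<noteq> {}"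
    using AB by (auto simp: wstar_convex_compact_iff)
  show ?thesis
  proof (cases "t i \<le> 0")
    case True
    have "a (sweep \<eta> t) \<le> \<eta> * t i" if "a \<in> A (Suc i)" for a
    proof -
      have "a (sweep \<eta> t) \<le> \<eta> * (- t i * a (p (Suc i)))"
        using apply_sweep_le[OF i _ \<open>\<eta> \<ge> 0\<close>, of a t] that True by simp
      also have "\<dots> \<le> \<eta> * t i"
        using mult_left_mono[OF p_dir[OF k that], of "- t i"] True \<open>\<eta> \<ge> 0\<close>
        by (intro mult_left_mono) auto
      finally show ?thesis .
    qed
    then have "dderiv (f (Suc i)) x (sweep \<eta> t) \<le> \<eta> * t i"
      using dderiv_le[OF k] supp_least[OF nonempty(1)] by (meson order.trans)
    then have "t i * (\<eta> * t i) \<le> t i * dderiv (f (Suc i)) x (sweep \<eta> t)"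
      using True by (rule mult_left_mono_neg)
    then show ?thesis
      by (simp add: power2_eq_square algebra_simps)
  next
    case False
    have "b (sweep \<eta> t) \<le> - (\<eta> * t i)" if "b \<in> B (Suc i)" for b
    proof -
      have "b (sweep \<eta> t) \<le> \<eta> * (t i * b (q (Suc i)))"
        using apply_sweep_le[OF i _ \<open>\<eta> \<ge> 0\<close>, of b t] that False by simp
      also have "\<dots> \<le> - (\<eta> * t i)"
        using mult_left_mono[OF q_dir[OF k that], of "t i"] False \<open>\<eta> \<ge> 0\<close>
        by (intro mult_left_mono[of _ "- t i", simplified]) auto
      finally show ?thesis .
    qed
    then have "\<eta> * t i \<le> dderiv (f (Suc i)) x (sweep \<eta> t)"
      using dderiv_ge[OF k, of "sweep \<eta> t"] supp_least[OF nonempty(2)] by force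
    then have "t i * (\<eta> * t i) \<le> t i * dderiv (f (Suc i)) x (sweep \<eta> t)"
      using False by (intro mult_left_mono) auto
    then show ?thesis
      by (simp add: power2_eq_square algebra_simps)
  qed
qed

lemma eventually_sweep_quotients_close:
  assumes "\<epsilon> > 0"
  shows "\<forall>\<^sub>F \<alpha> in at_right 0. \<forall>i<m. \<forall>t\<in>fin_ball m.
    \<bar>f (Suc i) (x + \<alpha> *\<^sub>R sweep \<eta> t) / \<alpha> - dderiv (f (Suc i)) x (sweep \<eta> t)\<bar> < \<epsilon>"
proof -
  have "compact (sweep \<eta> ` fin_ball m)"
    by (intro compact_continuous_image continuous_on_sweep compact_fin_ball)
  then have "\<forall>\<^sub>F \<alpha> in at_right 0. \<forall>w\<in>sweep \<eta> ` fin_ball m.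
      \<bar>(f k (x + \<alpha> *\<^sub>R w) - f k x) / \<alpha> - dderiv (f k) x w\<bar> < \<epsilon>" if "k \<in> {1..m}" for k
    using f_diff[OF that] sweep_minus_in_span assms
    by (intro dir_diff_unif_uniformly_on_compact[where W = "p ` {1..m} \<union> q ` {1..m}"]) auto
  then have "\<forall>\<^sub>F \<alpha> in at_right 0. \<forall>i\<in>{..<m}. \<forall>w\<in>sweep \<eta> ` fin_ball m.
      \<bar>(f (Suc i) (x + \<alpha> *\<^sub>R w) - f (Suc i) x) / \<alpha> - dderiv (f (Suc i)) x w\<bar> < \<epsilon>"
    by (intro eventually_ball_finite) auto
  then show ?thesis
    by (rule eventually_mono) (simp add: f_zero)
qed

lemma eventually_sweep_continuous:
  "\<forall>\<^sub>F \<alpha> in at_right 0. \<forall>i<m. continuous_on (fin_ball m) (\<lambda>t. f (Suc i) (x + \<alpha> *\<^sub>R sweep \<eta> t))"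
proof -
  have "bounded (sweep \<eta> ` fin_ball m)"
    by (intro compact_imp_bounded compact_continuous_image continuous_on_sweep compact_fin_ball)
  then obtain R where R: "R > 0" "\<And>t. t \<in> fin_ball m \<Longrightarrow> norm (sweep \<eta> t) \<le> R"
    unfolding bounded_pos by blast
  have "\<forall>\<^sub>F \<alpha> in at_right 0. continuous_on (fin_ball m) (\<lambda>t. f k (x + \<alpha> *\<^sub>R sweep \<eta> t))"
    if k: "k \<in> {1..m}" for k
  proof -
    obtain r where "r > 0" and f_k: "continuous_on (ball x r) (f k)"
      using f_cont[OF k] by blast
    have "\<forall>\<^sub>F \<alpha> in at_right 0. 0 < \<alpha> \<and> \<alpha> < r / R"
      using R(1) \<open>r > 0\<close> by (intro eventually_conj eventually_at_right_less eventually_at_right_0_less) simp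
    then show ?thesis
    proof (rule eventually_mono)
      fix \<alpha> assume \<alpha>: "0 < \<alpha> \<and> \<alpha> < r / R"
      have "(\<lambda>t. x + \<alpha> *\<^sub>R sweep \<eta> t) ` fin_ball m \<subseteq> ball x r"
      proof clarify
        fix t assume "t \<in> fin_ball m"
        then have "\<alpha> * norm (sweep \<eta> t) \<le> \<alpha> * R"
          using R(2) \<alpha> by (intro mult_left_mono) auto
        also have "\<dots> < r"
          using \<alpha> R(1) by (simp add: pos_less_divide_eq)
        finally show "x + \<alpha> *\<^sub>R sweep \<eta> t \<in> ball x r"
          using \<alpha> by (simp add: dist_norm)
      qed
      then show "continuous_on (fin_ball m) (\<lambda>t. f k (x + \<alpha> *\<^sub>R sweep \<eta> t))"
        by (intro continuous_on_compose2[OF f_k] continuous_intros continuous_on_sweep)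
    qed
  qed
  then have "\<forall>\<^sub>F \<alpha> in at_right 0. \<forall>i\<in>{..<m}.
      continuous_on (fin_ball m) (\<lambda>t. f (Suc i) (x + \<alpha> *\<^sub>R sweep \<eta> t))"
    by (intro eventually_ball_finite) auto
  then show ?thesis
    by (rule eventually_mono) simp
qed

lemma sweep_field_outward:
  assumes "\<eta> > 0"
    and near: "\<And>i t. i < m \<Longrightarrow> t \<in> fin_ball m \<Longrightarrow>
      \<bar>g t i - dderiv (f (Suc i)) x (sweep \<eta> t)\<bar> < \<eta> / (2 * m)"
    and t: "t \<in> fin_sphere m"
  shows "0 < (\<Sum>i<m. t i * g t i)"
proof -
  have t_ball: "t \<in> fin_ball m"
    using t fin_sphere_subset_ball by auto
  have "\<eta> * (t i)\<^sup>2 - \<eta> / (2 * m) \<le> t i * g t i" if "i < m" for i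
  proof -
    define d where "d = dderiv (f (Suc i)) x (sweep \<eta> t)"
    have "\<bar>t i * (g t i - d)\<bar> \<le> \<bar>g t i - d\<bar>"
      using abs_le_1_if_fin_ball[OF t_ball, of i] by (simp add: abs_mult mult_left_le_one_le)
    moreover have "\<bar>g t i - d\<bar> < \<eta> / (2 * m)"
      using near[OF that t_ball] by (simp add: d_def)
    moreover have "\<eta> * (t i)\<^sup>2 \<le> t i * d"
      unfolding d_def using sweep_sign[OF that] assms(1) by simp
    ultimately show ?thesis
      by (simp add: right_diff_distrib abs_le_iff)
  qed
  then have "(\<Sum>i<m. \<eta> * (t i)\<^sup>2 - \<eta> / (2 * m)) \<le> (\<Sum>i<m. t i * g t i)"
    by (intro sum_mono) auto
  moreover have "(\<Sum>i<m. \<eta> * (t i)\<^sup>2 - \<eta> / (2 * m)) = \<eta> / 2"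
    using t m_pos by (simp add: sum_subtractf flip: sum_distrib_left) (simp add: fin_sphere_def)
  ultimately show ?thesis
    using assms(1) by linarith
qed

text \<open>For small \<open>\<alpha>\<close> the field \<open>t \<mapsto> f (x + \<alpha> sweep \<eta> t) / \<alpha>\<close> is close to the directional
  derivatives, which point outward on the sphere by \<open>sweep_sign\<close>.\<close>

lemma zero_along_sweep:
  assumes "\<eta> > 0"
  obtains \<alpha> t where "0 < \<alpha>" "\<alpha> < \<eta>" "t \<in> fin_ball m"
    "\<And>k. k \<in> {1..m} \<Longrightarrow> f k (x + \<alpha> *\<^sub>R sweep \<eta> t) = 0"
proof -
  define \<epsilon> where "\<epsilon> = \<eta> / (2 * m)"
  have "\<epsilon> > 0"
    using assms m_pos by (simp add: \<epsilon>_def)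
  have "\<forall>\<^sub>F \<alpha> in at_right 0. (0 < \<alpha> \<and> \<alpha> < \<eta>) \<and>
      (\<forall>i<m. \<forall>t\<in>fin_ball m.
        \<bar>f (Suc i) (x + \<alpha> *\<^sub>R sweep \<eta> t) / \<alpha> - dderiv (f (Suc i)) x (sweep \<eta> t)\<bar> < \<epsilon>) \<and>
      (\<forall>i<m. continuous_on (fin_ball m) (\<lambda>t. f (Suc i) (x + \<alpha> *\<^sub>R sweep \<eta> t)))"
    using assms \<open>\<epsilon> > 0\<close>
    by (intro eventually_conj eventually_at_right_less eventually_at_right_0_less
        eventually_sweep_quotients_close eventually_sweep_continuous)
  then obtain \<alpha> where \<alpha>: "0 < \<alpha>" "\<alpha> < \<eta>"
    and close: "\<And>i t. i < m \<Longrightarrow> t \<in> fin_ball m \<Longrightarrow>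
      \<bar>f (Suc i) (x + \<alpha> *\<^sub>R sweep \<eta> t) / \<alpha> - dderiv (f (Suc i)) x (sweep \<eta> t)\<bar> < \<epsilon>"
    and cont: "\<And>i. i < m \<Longrightarrow> continuous_on (fin_ball m) (\<lambda>t. f (Suc i) (x + \<alpha> *\<^sub>R sweep \<eta> t))"
    using eventually_happens'[OF trivial_limit_at_right_real] by blast
  define g where "g t i = f (Suc i) (x + \<alpha> *\<^sub>R sweep \<eta> t) / \<alpha>" for t i
  have "continuous_on (fin_ball m) (\<lambda>t. g t i)" if "i < m" for i
    unfolding g_def using cont[OF that] \<alpha>(1) by (intro continuous_on_divide continuous_on_const) auto
  moreover have "0 < (\<Sum>i<m. t i * g t i)" if "t \<in> fin_sphere m" for t
  proof (rule sweep_field_outward[OF assms _ that])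
    show "\<bar>g s i - dderiv (f (Suc i)) x (sweep \<eta> s)\<bar> < \<eta> / (2 * m)"
      if "i < m" "s \<in> fin_ball m" for i s
      using close[OF that] by (simp add: g_def \<epsilon>_def)
  qed
  ultimately obtain t where t: "t \<in> fin_ball m" "\<And>i. i < m \<Longrightarrow> g t i = 0"
    using outward_field_has_zero[OF m_pos] by blast
  have "f k (x + \<alpha> *\<^sub>R sweep \<eta> t) = 0" if k: "k \<in> {1..m}" for k
  proof -
    obtain i where "k = Suc i" "i < m"
      using k by (cases k) auto
    then show ?thesis
      using t(2)[of i] \<alpha>(1) by (simp add: g_def)
  qed
  then show thesis
    using that \<alpha> t(1) by blast
qed

lemma approximate_zeros:
  assumes "\<epsilon> > 0"
  shows "\<exists>\<alpha> u. 0 < \<alpha> \<and> \<alpha> < \<epsilon> \<and> norm (u - v) < \<epsilon> \<and> x + \<alpha> *\<^sub>R u \<in> {y. \<forall>k\<in>{1..m}. f k y = 0}"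
proof -
  define L where "L = (\<Sum>j<m. norm (q (Suc j)) + norm (p (Suc j)))"
  define \<eta> where "\<eta> = \<epsilon> / (L + 1)"
  have "L \<ge> 0"
    unfolding L_def by (intro sum_nonneg) auto
  then have "\<eta> > 0" "\<eta> \<le> \<epsilon>" "\<eta> * L < \<epsilon>"
    using assms by (auto simp: \<eta>_def field_simps)
  obtain \<alpha> t where "0 < \<alpha>" "\<alpha> < \<eta>" "t \<in> fin_ball m"
    and zero: "\<And>k. k \<in> {1..m} \<Longrightarrow> f k (x + \<alpha> *\<^sub>R sweep \<eta> t) = 0"
    using zero_along_sweep[OF \<open>\<eta> > 0\<close>] by blast
  moreover have "norm (sweep \<eta> t - v) < \<epsilon>"
    using norm_sweep_minus_le[OF \<open>t \<in> fin_ball m\<close>, of \<eta>] \<open>\<eta> > 0\<close> \<open>\<eta> * L < \<epsilon>\<close>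
    unfolding L_def by linarith
  ultimately show ?thesis
    using \<open>\<eta> \<le> \<epsilon>\<close> by (intro exI[of _ \<alpha>] exI[of _ "sweep \<eta> t"]) auto
qed

end

lemma contingent_coneI:
  assumes "\<And>\<epsilon>. \<epsilon> > 0 \<Longrightarrow> \<exists>\<alpha> u. 0 < \<alpha> \<and> \<alpha> < \<epsilon> \<and> norm (u - v) < \<epsilon> \<and> x + \<alpha> *\<^sub>R u \<in> M"
  shows "v \<in> contingent_cone M x"
proof -
  have "\<forall>n. \<exists>\<alpha> u. 0 < \<alpha> \<and> \<alpha> < inverse (real (Suc n)) \<and> norm (u - v) < inverse (real (Suc n))
      \<and> x + \<alpha> *\<^sub>R u \<in> M"
    using assms by simp
  then obtain \<alpha> u where \<alpha>: "\<And>n. 0 < \<alpha> n" "\<And>n. \<alpha> n < inverse (real (Suc n))"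
    and u: "\<And>n. norm (u n - v) < inverse (real (Suc n))" and in_M: "\<And>n. x + \<alpha> n *\<^sub>R u n \<in> M"
    by metis
  have "\<alpha> \<longlonglongrightarrow> 0"
    by (rule tendsto_sandwich[OF _ _ tendsto_const LIMSEQ_inverse_real_of_nat])
      (use \<alpha> in \<open>auto intro!: always_eventually less_imp_le\<close>)
  moreover have "(\<lambda>n. u n - v) \<longlonglongrightarrow> 0"
    by (rule Lim_null_comparison[OF _ LIMSEQ_inverse_real_of_nat]) (use u in \<open>auto intro!: always_eventually less_imp_le\<close>)
  then have "u \<longlonglongrightarrow> v"
    by (rule LIM_zero_cancel)
  ultimately show ?thesis
    unfolding contingent_cone_def using \<alpha>(1) in_M by blast
qed

lemma quasidiff_lyusternik_setting:
  fixes f :: "nat \<Rightarrow> 'a::real_normed_vector \<Rightarrow> real"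
  assumes "m \<ge> 1" "\<And>k. k \<in> {1..m} \<Longrightarrow> f k x = 0"
    and "\<And>k. k \<in> {1..m} \<Longrightarrow> \<exists>r>0. continuous_on (ball x r) (f k)"
    and qd: "\<And>k. k \<in> {1..m} \<Longrightarrow> quasidiff_unif (f k) x (Dl k) (Du k) \<and> xs k \<in> Dl k \<and> ys k \<in> Du k"
    and C_def: "\<And>k. C k = fplus (Dl k) (ys k) \<union> fplus (fneg (Du k)) (\<lambda>x. - xs k x)"
    and disjoint: "\<And>k. k \<in> {1..m} \<Longrightarrow>
      C k \<inter> wstar_closure (cone_fam {fneg (C j) | j. j \<in> {1..m} \<and> j \<noteq> k}) = {}"
    and v: "\<And>k. k \<in> {1..m} \<Longrightarrow>
      supp (fplus (Dl k) (ys k)) v \<le> 0 \<and> supp (fplus (fneg (Du k)) (\<lambda>x. - xs k x)) v \<le> 0"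
  obtains p q where "lyusternik_setting f m x v
    (\<lambda>k. fplus (Dl k) (ys k)) (\<lambda>k. fplus (fneg (Du k)) (\<lambda>x. - xs k x)) p q"
proof -
  define A where "A k = fplus (Dl k) (ys k)" for k
  define B where "B k = fplus (fneg (Du k)) (\<lambda>x. - xs k x)" for k
  have AB: "wstar_convex_compact (A k) \<and> wstar_convex_compact (B k)" if "k \<in> {1..m}" for k
    using quasidiff_unif_wstar_convex_compact[of "f k" x "Dl k" "Du k" "xs k" "ys k"] qd[OF that]
    by (simp add: A_def B_def)
  have C_AB: "C k = A k \<union> B k" for k
    using C_def by (simp add: A_def B_def)
  have lin: "linear c" if "j \<in> {1..m}" "c \<in> C j" for j c
    using AB[OF that(1)] that(2) by (auto simp: C_AB wstar_convex_compact_iff dual_space_linear)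
  obtain p where p: "\<And>k a. k \<in> {1..m} \<Longrightarrow> a \<in> A k \<Longrightarrow> a (p k) \<le> -1"
    "\<And>k j c. k \<in> {1..m} \<Longrightarrow> j \<in> {1..m} \<Longrightarrow> j \<noteq> k \<Longrightarrow> c \<in> C j \<Longrightarrow> c (p k) \<le> 0"
    using separating_directions[of "{1..m}" A C] AB lin disjoint by (auto simp: C_AB)
  obtain q where q: "\<And>k b. k \<in> {1..m} \<Longrightarrow> b \<in> B k \<Longrightarrow> b (q k) \<le> -1"
    "\<And>k j c. k \<in> {1..m} \<Longrightarrow> j \<in> {1..m} \<Longrightarrow> j \<noteq> k \<Longrightarrow> c \<in> C j \<Longrightarrow> c (q k) \<le> 0"
    using separating_directions[of "{1..m}" B C] AB lin disjoint by (auto simp: C_AB)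
  have "lyusternik_setting f m x v A B p q"
  proof unfold_locales
    fix k w assume k: "k \<in> {1..m}"
    show "dir_diff_unif (f k) x"
      using qd[OF k] quasidiff_unif_dir_diff_unif by blast
    show "dderiv (f k) x w \<le> supp (A k) w"
      unfolding A_def using qd[OF k] quasidiff_unif_dderiv_le by blast
    show "- supp (B k) w \<le> dderiv (f k) x w"
      unfolding B_def using qd[OF k] quasidiff_unif_dderiv_ge by blast
  qed (use assms(1-3) AB v p q in \<open>auto simp: A_def B_def C_AB\<close>)
  then show thesis
    unfolding A_def B_def by (rule that)
qed

theorem corollary1:
  fixes f :: "nat \<Rightarrow> 'a::banach \<Rightarrow> real"
    and Dl Du :: "nat \<Rightarrow> ('a \<Rightarrow> real) set"
    and xs ys :: "nat \<Rightarrow> 'a \<Rightarrow> real"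
    and m :: nat and M :: "'a set" and xb :: 'a
    and C :: "nat \<Rightarrow> ('a \<Rightarrow> real) set"
  assumes "m \<ge> 1"
    and M_def: "M = {x. \<forall>i\<in>{1..m}. f i x = 0}"
    and "xb \<in> M"
    and "\<forall>i\<in>{1..m}. \<exists>r>0. continuous_on (ball xb r) (f i)"
    and "\<forall>i\<in>{1..m}. quasidiff_unif (f i) xb (Dl i) (Du i)"
    and "\<forall>i\<in>{1..m}. xs i \<in> Dl i \<and> ys i \<in> Du i"
    and C_def: "\<forall>i. C i = fplus (Dl i) (ys i) \<union> fplus (fneg (Du i)) (\<lambda>x. - xs i x)"
    and "\<forall>i\<in>{1..m}. C i \<inter> wstar_closure (cone_fam {fneg (C k) | k. k \<in> {1..m} \<and> k \<noteq> i}) = {}"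
  shows "{v. \<forall>i\<in>{1..m}. supp (fplus (Dl i) (ys i)) v \<le> 0 \<and>
                         supp (fplus (fneg (Du i)) (\<lambda>x. - xs i x)) v \<le> 0}
           \<subseteq> contingent_cone M xb"
proof
  fix v assume "v \<in> {v. \<forall>i\<in>{1..m}. supp (fplus (Dl i) (ys i)) v \<le> 0 \<and>
    supp (fplus (fneg (Du i)) (\<lambda>x. - xs i x)) v \<le> 0}"
  then obtain p q where setting: "lyusternik_setting f m xb v
      (\<lambda>k. fplus (Dl k) (ys k)) (\<lambda>k. fplus (fneg (Du k)) (\<lambda>x. - xs k x)) p q"
    using quasidiff_lyusternik_setting[of m f xb Dl Du xs ys C v] assms by (auto simp: M_def)
  show "v \<in> contingent_cone M xb"
    unfolding M_def by (rule contingent_coneI) (rule lyusternik_setting.approximate_zeros[OF setting])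
qed

end
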